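(* Let $\mathbf A\in\mathbb R^{m\times n}$ and let $\mathbf x^0\in\mathbb R^n$ be $k$-sparse. If the RIP constant of $\mathbf A$ satisfies $\delta_{2k}\le 0.4404$ and $\alpha\ge 10\|\mathbf x^0\|_\infty$ (with $\alpha>0$), then $\mathbf x^0$ is the unique minimizer of problem (P2) with $\mathbf b:=\mathbf A\mathbf x^0$.
   Context: Problem (P2) is $\min_{\mathbf x}\{\|\mathbf x\|_1+\frac{1}{2\alpha}\|\mathbf x\|_2^2:\ \mathbf A\mathbf x=\mathbf b\}$. A vector is $k$-sparse if it has at most $k$ nonzero entries. The RIP constant $\delta_k$ of $\mathbf A$ is the smallest value such that $(1-\delta_k)\|\mathbf x\|_2^2\le\|\mathbf A\mathbf x\|_2^2\le(1+\delta_k)\|\mathbf x\|_2^2$ for all $k$-sparse $\mathbf x\in\mathbb R^n$. *)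

theory Defs
  imports "HOL-Analysis.Analysis"
begin

definition sparse :: "nat \<Rightarrow> real ^ 'n \<Rightarrow> bool" where
  "sparse k x \<longleftrightarrow> card {i. x $ i \<noteq> 0} \<le> k"

definition l1norm :: "real ^ 'n \<Rightarrow> real" where
  "l1norm x = (\<Sum>i\<in>UNIV. \<bar>x $ i\<bar>)"

definition linfnorm :: "real ^ 'n \<Rightarrow> real" where
  "linfnorm x = Max (range (\<lambda>i. \<bar>x $ i\<bar>))"

definition rip_const :: "real ^ 'n ^ 'm \<Rightarrow> nat \<Rightarrow> real" where
  "rip_const A s = Inf {d. 0 \<le> d \<and> (\<forall>x. sparse s x \<longrightarrow>
      (1 - d) * (norm x)\<^sup>2 \<le> (norm (A *v x))\<^sup>2 \<and> (norm (A *v x))\<^sup>2 \<le> (1 + d) * (norm x)\<^sup>2)}"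

definition P2_obj :: "real \<Rightarrow> real ^ 'n \<Rightarrow> real" where
  "P2_obj \<alpha> x = l1norm x + (1 / (2 * \<alpha>)) * (norm x)\<^sup>2"

definition P2_unique_minimizer :: "real ^ 'n ^ 'm \<Rightarrow> real ^ 'm \<Rightarrow> real \<Rightarrow> real ^ 'n \<Rightarrow> bool" where
  "P2_unique_minimizer A b \<alpha> x0 \<longleftrightarrow> A *v x0 = b \<and>
     (\<forall>x. A *v x = b \<and> x \<noteq> x0 \<longrightarrow> P2_obj \<alpha> x0 < P2_obj \<alpha> x)"

end

theory Submission
  imports Defs
begin

(* Let h be a nonzero vector with A h = 0 and let S be the support of x0, |S| <= k.
   1. A null space property: 11 |h_S|_1 <= 10 |h_{S^c}|_1.  Order the coordinates of h by
      decreasing modulus and cut them into blocks of size k.  The RIP on pairs of blocks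
      bounds the cross terms <A z_0, A z_j> via a discriminant argument; together with
      A h = 0 this controls the energy of the head block z_0 by the l2 norms of the other
      blocks, which are in turn controlled by the l1 norms of the blocks.  Comparing the
      head with the tail l1 mass then gives the claim as soon as delta_2k <= 0.4404.
   2. Coordinatewise, since |x0_i| <= alpha/10, the objective increases from x0 to x0 + h
      by at least |h|_1 - 21/10 |h_S|_1 + |h|_2^2 / (2 alpha), which is positive by 1. *)

definition has_rip :: "real ^ 'n ^ 'm \<Rightarrow> nat \<Rightarrow> real \<Rightarrow> bool" where
  "has_rip A s d \<longleftrightarrow> (\<forall>x. sparse s x \<longrightarrow>
      (1 - d) * (norm x)\<^sup>2 \<le> (norm (A *v x))\<^sup>2 \<and> (norm (A *v x))\<^sup>2 \<le> (1 + d) * (norm x)\<^sup>2)"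

(* The admissible constants form a closed set, being an intersection of closed half-lines. *)
lemma has_rip_closed:
  fixes A :: "real ^ 'n ^ 'm"
  shows "closed {d. 0 \<le> d \<and> has_rip A s d}"
proof -
  have "{d. 0 \<le> d \<and> has_rip A s d} = {d. 0 \<le> d} \<inter> (\<Inter>x\<in>{x. sparse s x}.
      {d. (1 - d) * (norm x)\<^sup>2 \<le> (norm (A *v x))\<^sup>2} \<inter> {d. (norm (A *v x))\<^sup>2 \<le> (1 + d) * (norm x)\<^sup>2})"
    unfolding has_rip_def by auto
  also have "closed \<dots>"
    by (intro closed_Int closed_INT ballI closed_Collect_le continuous_intros)
  finally show ?thesis .
qed

(* Some constant is admissible: a bounded linear map satisfies the upper inequality with
   1 + K^2, and the lower one is then trivial. *)
lemma has_rip_exists: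
  fixes A :: "real ^ 'n ^ 'm"
  shows "\<exists>d \<ge> 0. has_rip A s d"
proof -
  obtain K where K: "\<And>x. norm (A *v x) \<le> norm x * K"
    using bounded_linear.bounded[OF matrix_vector_mul_bounded_linear] by blast
  have "has_rip A s (1 + K\<^sup>2)"
    unfolding has_rip_def
  proof (intro allI impI conjI)
    fix x :: "real ^ 'n"
    have "(norm (A *v x))\<^sup>2 \<le> (norm x * K)\<^sup>2"
      using K[of x] by (simp add: power_mono)
    also have "\<dots> \<le> (1 + (1 + K\<^sup>2)) * (norm x)\<^sup>2"
      by (simp add: power_mult_distrib algebra_simps)
    finally show "(norm (A *v x))\<^sup>2 \<le> (1 + (1 + K\<^sup>2)) * (norm x)\<^sup>2" .
    show "(1 - (1 + K\<^sup>2)) * (norm x)\<^sup>2 \<le> (norm (A *v x))\<^sup>2"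
      by (simp add: order_trans[OF _ zero_le_power2])
  qed
  then show ?thesis by (intro exI[of _ "1 + K\<^sup>2"]) auto
qed

lemma rip_const_has_rip:
  fixes A :: "real ^ 'n ^ 'm"
  shows "0 \<le> rip_const A s \<and> has_rip A s (rip_const A s)"
proof -
  let ?D = "{d. 0 \<le> d \<and> has_rip A s d}"
  have "rip_const A s = Inf ?D" unfolding rip_const_def has_rip_def by simp
  moreover have "Inf ?D \<in> ?D"
    using has_rip_exists[of A s] has_rip_closed[of A s]
    by (intro closed_contains_Inf) (auto simp: bdd_below_def)
  ultimately show ?thesis by simp
qed

lemma nonneg_quadratic_discriminant:
  fixes P q K :: real
  assumes K: "K \<ge> 0" and nonneg: "\<And>l. 0 \<le> P + 2 * l * q + l\<^sup>2 * K"
  shows "q\<^sup>2 \<le> K * P"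
proof (cases "K = 0")
  case False
  then have "0 < K" using K by simp
  have "0 \<le> P + 2 * (- q / K) * q + (- q / K)\<^sup>2 * K" by (rule nonneg)
  also have "\<dots> = P - q\<^sup>2 / K" using \<open>0 < K\<close> by (simp add: field_simps power2_eq_square)
  finally show ?thesis using \<open>0 < K\<close> by (simp add: field_simps)
next
  case True
  have "q = 0"
  proof (rule ccontr)
    assume "q \<noteq> 0"
    have "0 \<le> P + 2 * (- (\<bar>P\<bar> + 1) / (2 * q)) * q + (- (\<bar>P\<bar> + 1) / (2 * q))\<^sup>2 * K"
      by (rule nonneg)
    also have "\<dots> = P - (\<bar>P\<bar> + 1)" using \<open>q \<noteq> 0\<close> True by (simp add: field_simps)
    finally show False by simp
  qed
  then show ?thesis using True nonneg[of 0] by simp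
qed

lemma sqrt_mult_le_amgm:
  fixes \<delta> P M :: real
  assumes "0 \<le> \<delta>" "0 \<le> P"
  shows "sqrt (2 * \<delta> * P) * M \<le> P + \<delta> * M\<^sup>2 / 2"
proof -
  have "sqrt (2 * \<delta> * P) * M = sqrt (2 * P) * (sqrt \<delta> * M)"
    by (simp add: real_sqrt_mult)
  also have "\<dots> \<le> ((sqrt (2 * P))\<^sup>2 + (sqrt \<delta> * M)\<^sup>2) / 2"
    using sum_squares_bound[of "sqrt (2 * P)" "sqrt \<delta> * M"] by simp
  also have "\<dots> = P + \<delta> * M\<^sup>2 / 2"
    using assms by (simp add: power_mult_distrib)
  finally show ?thesis .
qed

(* For orthogonal u, v such that every u + l v is s-sparse, applying
   the lower RIP bound to u + l v gives a quadratic in l that stays nonnegative; its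
   discriminant bounds <Au, Av> by the RIP slack of u. *)
lemma rip_cross_term:
  fixes A :: "real ^ 'n ^ 'm" and u v :: "real ^ 'n"
  assumes rip: "has_rip A s \<delta>" and "0 \<le> \<delta>"
    and sparse_v: "sparse s v" and sparse_comb: "\<And>l. sparse s (u + l *\<^sub>R v)"
    and orth: "inner u v = 0"
  shows "\<bar>inner (A *v u) (A *v v)\<bar>
           \<le> sqrt (2 * \<delta> * ((norm (A *v u))\<^sup>2 - (1 - \<delta>) * (norm u)\<^sup>2)) * norm v"
proof -
  define P where "P = (norm (A *v u))\<^sup>2 - (1 - \<delta>) * (norm u)\<^sup>2"
  define q where "q = inner (A *v u) (A *v v)"
  have upper_v: "(norm (A *v v))\<^sup>2 \<le> (1 + \<delta>) * (norm v)\<^sup>2"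
    using rip sparse_v unfolding has_rip_def by blast
  have quad: "0 \<le> P + 2 * l * q + l\<^sup>2 * (2 * \<delta> * (norm v)\<^sup>2)" for l
  proof -
    have "(1 - \<delta>) * (norm (u + l *\<^sub>R v))\<^sup>2 \<le> (norm (A *v (u + l *\<^sub>R v)))\<^sup>2"
      using rip sparse_comb unfolding has_rip_def by blast
    moreover have "(norm (u + l *\<^sub>R v))\<^sup>2 = (norm u)\<^sup>2 + l\<^sup>2 * (norm v)\<^sup>2"
      unfolding power2_norm_eq_inner using orth
      by (simp add: inner_add_left inner_add_right inner_commute power2_eq_square)
    moreover have "(norm (A *v (u + l *\<^sub>R v)))\<^sup>2
        = (norm (A *v u))\<^sup>2 + 2 * l * q + l\<^sup>2 * (norm (A *v v))\<^sup>2"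
      unfolding q_def power2_norm_eq_inner
      by (simp add: matrix_vector_right_distrib matrix_vector_mult_scaleR inner_add_left
          inner_add_right inner_commute power2_eq_square algebra_simps)
    moreover have "l\<^sup>2 * (norm (A *v v))\<^sup>2 \<le> l\<^sup>2 * ((1 + \<delta>) * (norm v)\<^sup>2)"
      using upper_v by (simp add: mult_left_mono)
    ultimately show ?thesis unfolding P_def by (simp add: algebra_simps)
  qed
  have "0 \<le> P" using quad[of 0] by simp
  have "q\<^sup>2 \<le> (2 * \<delta> * (norm v)\<^sup>2) * P"
    using \<open>0 \<le> \<delta>\<close> quad by (intro nonneg_quadratic_discriminant) auto
  also have "\<dots> = (sqrt (2 * \<delta> * P) * norm v)\<^sup>2"
    using \<open>0 \<le> \<delta>\<close> \<open>0 \<le> P\<close> by (simp add: power_mult_distrib)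
  finally have "\<bar>q\<bar>\<^sup>2 \<le> (sqrt (2 * \<delta> * P) * norm v)\<^sup>2" by simp
  then have "\<bar>q\<bar> \<le> sqrt (2 * \<delta> * P) * norm v"
    by (rule power2_le_imp_le) (simp add: \<open>0 \<le> \<delta>\<close> \<open>0 \<le> P\<close>)
  then show ?thesis unfolding P_def q_def .
qed

(* If u + (sum of w j) lies in the kernel, then
   |Au|^2 = - sum <Au, A w j> is bounded by the cross-term estimates, and the slack
   P = |Au|^2 - (1 - delta) |u|^2 is absorbed by AM-GM. *)
lemma rip_head_energy:
  fixes A :: "real ^ 'n ^ 'm" and u :: "real ^ 'n" and w :: "'j \<Rightarrow> real ^ 'n"
  assumes rip: "has_rip A s \<delta>" and "0 \<le> \<delta>" and "finite J"
    and sparse_u: "sparse s u" and sparse_w: "\<And>j. j \<in> J \<Longrightarrow> sparse s (w j)"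
    and sparse_comb: "\<And>j l. j \<in> J \<Longrightarrow> sparse s (u + l *\<^sub>R w j)"
    and orth: "\<And>j. j \<in> J \<Longrightarrow> inner u (w j) = 0"
    and kernel: "A *v (u + (\<Sum>j\<in>J. w j)) = 0"
  shows "(1 - \<delta>) * (norm u)\<^sup>2 \<le> \<delta> * (\<Sum>j\<in>J. norm (w j))\<^sup>2 / 2"
proof -
  define P where "P = (norm (A *v u))\<^sup>2 - (1 - \<delta>) * (norm u)\<^sup>2"
  define M where "M = (\<Sum>j\<in>J. norm (w j))"
  have "0 \<le> P" using rip sparse_u unfolding has_rip_def P_def by auto
  have Au: "A *v u = - (\<Sum>j\<in>J. A *v w j)"
    using kernel by (simp add: matrix_vector_right_distrib vec.sum eq_neg_iff_add_eq_0)
  have "(norm (A *v u))\<^sup>2 = - (\<Sum>j\<in>J. inner (A *v u) (A *v w j))"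
    unfolding power2_norm_eq_inner by (subst (2) Au) (simp add: inner_sum_right)
  also have "\<dots> \<le> (\<Sum>j\<in>J. \<bar>inner (A *v u) (A *v w j)\<bar>)"
    by (simp add: sum_negf[symmetric] sum_mono)
  also have "\<dots> \<le> (\<Sum>j\<in>J. sqrt (2 * \<delta> * P) * norm (w j))"
    unfolding P_def using assms by (intro sum_mono rip_cross_term) auto
  also have "\<dots> = sqrt (2 * \<delta> * P) * M" unfolding M_def by (simp add: sum_distrib_left)
  also have "\<dots> \<le> P + \<delta> * M\<^sup>2 / 2"
    using \<open>0 \<le> \<delta>\<close> \<open>0 \<le> P\<close> by (rule sqrt_mult_le_amgm)
  finally show ?thesis unfolding P_def M_def by simp
qed

definition block :: "nat \<Rightarrow> nat \<Rightarrow> nat set" where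
  "block k j = {j * k..<j * k + k}"

lemma finite_block [simp]: "finite (block k j)"
  and card_block [simp]: "card (block k j) = k"
  by (simp_all add: block_def)

lemma mem_block_iff:
  assumes "0 < k"
  shows "p \<in> block k j \<longleftrightarrow> j = p div k"
proof
  assume "p \<in> block k j"
  then show "j = p div k" using assms unfolding block_def
    by (metis add.commute atLeastLessThan_iff div_nat_eqI mult.commute mult_Suc_right)
next
  assume "j = p div k"
  then show "p \<in> block k j" using assms unfolding block_def
    by (simp add: add.commute dividend_less_times_div mult.commute)
qed

lemma sum_blocks: "(\<Sum>j<n. sum a (block k j)) = sum a {..<n * k}"
  unfolding block_def by (rule sum.nat_group)

lemma sum_le_initial_segment:
  fixes a :: "nat \<Rightarrow> real"
  assumes mono: "antimono a" and nonneg: "\<And>p. 0 \<le> a p"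
    and "finite P" and "card P \<le> k"
  shows "sum a P \<le> sum a {..<k}"
proof -
  let ?common = "P \<inter> {..<k}" and ?out = "P - {..<k}" and ?missed = "{..<k} - P"
  have P_split: "P = ?common \<union> ?out" and init_split: "{..<k} = ?common \<union> ?missed" by blast+
  have "card P = card ?common + card ?out"
    using \<open>finite P\<close> by (subst P_split, subst card_Un_disjoint) auto
  moreover have "card {..<k} = card ?common + card ?missed"
    by (subst init_split, subst card_Un_disjoint) auto
  ultimately have card_le: "card ?out \<le> card ?missed" using \<open>card P \<le> k\<close> by simp
  have "sum a ?out \<le> of_nat (card ?out) * a k"
    by (rule sum_bounded_above) (auto intro: antimonoD[OF mono])
  also have "\<dots> \<le> of_nat (card ?missed) * a k"
    using card_le nonneg[of k] by (simp add: mult_right_mono)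
  also have "\<dots> \<le> sum a ?missed"
    by (rule sum_bounded_below) (auto intro: antimonoD[OF mono])
  finally have "sum a ?out \<le> sum a ?missed" .
  moreover have "sum a P = sum a ?common + sum a ?out"
    using \<open>finite P\<close> by (subst P_split, subst sum.union_disjoint) auto
  moreover have "sum a {..<k} = sum a ?common + sum a ?missed"
    by (subst init_split, subst sum.union_disjoint) auto
  ultimately show ?thesis by simp
qed

(* Every entry of block j+1 is at most the average of block j, so the squared l2 norm of
   block j+1 is bounded by the product of the l1 norms of blocks j+1 and j, over k. *)
lemma block_sq_sum_le:
  fixes a :: "nat \<Rightarrow> real"
  assumes mono: "antimono a" and nonneg: "\<And>p. 0 \<le> a p" and "0 < k"
  shows "(\<Sum>p\<in>block k (Suc j). (a p)\<^sup>2) \<le> sum a (block k (Suc j)) * sum a (block k j) / k"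
proof -
  have bound: "a p \<le> sum a (block k j) / k" if "p \<in> block k (Suc j)" for p
  proof -
    have "of_nat (card (block k j)) * a p \<le> sum a (block k j)"
      by (rule sum_bounded_below) (use that in \<open>auto simp: block_def intro!: antimonoD[OF mono]\<close>)
    then show ?thesis using \<open>0 < k\<close> by (simp add: field_simps)
  qed
  have "(\<Sum>p\<in>block k (Suc j). (a p)\<^sup>2) \<le> (\<Sum>p\<in>block k (Suc j). a p * (sum a (block k j) / k))"
    by (rule sum_mono) (metis bound nonneg mult_left_mono power2_eq_square)
  also have "\<dots> = sum a (block k (Suc j)) * sum a (block k j) / k"
    by (simp only: sum_divide_distrib[symmetric] sum_distrib_right[symmetric] times_divide_eq_right)
  finally show ?thesis .
qed

(* Weighted AM-GM turns the previous bound into a linear one in the block l1 norms; the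
   weights 5/4 and 4/5 are the ones that make the final constant work. *)
lemma block_norm_le:
  fixes a :: "nat \<Rightarrow> real"
  assumes mono: "antimono a" and nonneg: "\<And>p. 0 \<le> a p" and "0 < k"
  shows "sqrt (\<Sum>p\<in>block k (Suc j). (a p)\<^sup>2)
           \<le> (5/4 * sum a (block k (Suc j)) + 4/5 * sum a (block k j)) / (2 * sqrt k)"
proof -
  define x where "x = sum a (block k (Suc j))"
  define y where "y = sum a (block k j)"
  have "0 \<le> x" "0 \<le> y" unfolding x_def y_def by (simp_all add: sum_nonneg nonneg)
  have "4 * (x * y) \<le> (5/4 * x + 4/5 * y)\<^sup>2"
    using zero_le_power2[of "5/4 * x - 4/5 * y"] by (simp add: power2_eq_square algebra_simps)
  then have "x * y / k \<le> ((5/4 * x + 4/5 * y) / (2 * sqrt k))\<^sup>2"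
    using \<open>0 < k\<close> by (simp add: power_divide power_mult_distrib field_simps)
  then have "(\<Sum>p\<in>block k (Suc j). (a p)\<^sup>2) \<le> ((5/4 * x + 4/5 * y) / (2 * sqrt k))\<^sup>2"
    using block_sq_sum_le[OF assms, of j] unfolding x_def y_def by linarith
  then show ?thesis unfolding x_def[symmetric] y_def[symmetric]
    using \<open>0 \<le> x\<close> \<open>0 \<le> y\<close> by (simp add: real_sqrt_le_iff real_le_lsqrt)
qed

(* The only place where the bound 0.4404 on the RIP constant enters. *)
lemma threshold_arith:
  fixes \<delta> X R :: real
  assumes "0 \<le> \<delta>" "\<delta> \<le> 0.4404" "0 \<le> X" "0 \<le> R"
    and energy: "(1 - \<delta>) * X\<^sup>2 \<le> \<delta> * (5/4 * R + 4/5 * (X + R))\<^sup>2 / 8"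
  shows "11 * X \<le> 10 * R"
proof -
  define Y where "Y = 5/4 * R + 4/5 * (X + R)"
  have "(1 - \<delta>) * X\<^sup>2 \<le> \<delta> / 8 * Y\<^sup>2"
    using energy unfolding Y_def by simp
  also have "\<dots> \<le> ((1 - \<delta>) * 0.1024) * Y\<^sup>2"
    using assms(2) by (intro mult_right_mono) simp_all
  also have "\<dots> = (1 - \<delta>) * (0.32 * Y)\<^sup>2"
    by (simp add: power2_eq_square)
  finally have "(1 - \<delta>) * X\<^sup>2 \<le> (1 - \<delta>) * (0.32 * Y)\<^sup>2" .
  then have "X\<^sup>2 \<le> (0.32 * Y)\<^sup>2" using assms(2) by simp
  then have "X \<le> 0.32 * Y" by (rule power2_le_imp_le) (use assms in \<open>simp add: Y_def\<close>)
  then show ?thesis unfolding Y_def using \<open>0 \<le> R\<close> by (simp add: field_simps)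
qed

(* Combines the block estimates
   with Cauchy-Schwarz on the head block. *)
lemma sorted_head_le_tail:
  fixes a :: "nat \<Rightarrow> real" and \<delta> :: real
  assumes mono: "antimono a" and nonneg: "\<And>p. 0 \<le> a p" and "0 < k"
    and "0 \<le> \<delta>" "\<delta> \<le> 0.4404"
    and head: "(1 - \<delta>) * (\<Sum>p\<in>block k 0. (a p)\<^sup>2)
                 \<le> \<delta> * (\<Sum>j<n. sqrt (\<Sum>p\<in>block k (Suc j). (a p)\<^sup>2))\<^sup>2 / 2"
  shows "11 * sum a (block k 0) \<le> 10 * (\<Sum>j<n. sum a (block k (Suc j)))"
proof -
  define X where "X j = sum a (block k j)" for j
  define R where "R = (\<Sum>j<n. X (Suc j))"
  define M where "M = (\<Sum>j<n. sqrt (\<Sum>p\<in>block k (Suc j). (a p)\<^sup>2))"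
  define Y where "Y = 5/4 * R + 4/5 * (X 0 + R)"
  have X_nonneg: "0 \<le> X j" for j unfolding X_def by (simp add: sum_nonneg nonneg)
  have "0 \<le> R" unfolding R_def by (simp add: sum_nonneg X_nonneg)
  have "0 < sqrt k" using \<open>0 < k\<close> by simp
  have "M \<le> (\<Sum>j<n. (5/4 * X (Suc j) + 4/5 * X j) / (2 * sqrt k))"
    unfolding M_def X_def by (intro sum_mono block_norm_le mono nonneg \<open>0 < k\<close>)
  also have "\<dots> = (5/4 * R + 4/5 * (\<Sum>j<n. X j)) / (2 * sqrt k)"
    unfolding R_def by (simp add: sum_divide_distrib[symmetric] sum.distrib sum_distrib_left)
  also have "\<dots> \<le> Y / (2 * sqrt k)"
  proof -
    have "(\<Sum>j<n. X j) \<le> (\<Sum>j<Suc n. X j)" by (simp add: X_nonneg)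
    also have "\<dots> = X 0 + R" unfolding R_def by (simp only: sum.lessThan_Suc_shift)
    finally show ?thesis unfolding Y_def using \<open>0 < sqrt k\<close> by (simp add: divide_right_mono)
  qed
  finally have M_le: "M \<le> Y / (2 * sqrt k)" .
  have "0 \<le> M" unfolding M_def by (simp add: sum_nonneg)
  have cauchy_schwarz: "(X 0)\<^sup>2 \<le> k * (\<Sum>p\<in>block k 0. (a p)\<^sup>2)"
    using sum_squared_le_sum_of_squares[of a "block k 0"] unfolding X_def by (simp add: mult.commute)
  have "(1 - \<delta>) * (X 0)\<^sup>2 \<le> k * ((1 - \<delta>) * (\<Sum>p\<in>block k 0. (a p)\<^sup>2))"
    using mult_left_mono[OF cauchy_schwarz, of "1 - \<delta>"] \<open>\<delta> \<le> 0.4404\<close> by simp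
  also have "\<dots> \<le> k * (\<delta> * M\<^sup>2 / 2)"
    using head unfolding M_def by (intro mult_left_mono) auto
  also have "\<dots> \<le> k * (\<delta> * (Y / (2 * sqrt k))\<^sup>2 / 2)"
    using M_le \<open>0 \<le> M\<close> \<open>0 \<le> \<delta>\<close> by (intro mult_left_mono divide_right_mono power_mono) auto
  also have "\<dots> = \<delta> * Y\<^sup>2 / 8"
    using \<open>0 < k\<close> by (simp add: power_divide power_mult_distrib)
  finally have "(1 - \<delta>) * (X 0)\<^sup>2 \<le> \<delta> * Y\<^sup>2 / 8" .
  then have "11 * X 0 \<le> 10 * R"
    unfolding Y_def using assms(4,5) X_nonneg \<open>0 \<le> R\<close> by (intro threshold_arith) auto
  then show ?thesis unfolding X_def R_def .
qed

definition sorted_ranking :: "real ^ 'n \<Rightarrow> ('n \<Rightarrow> nat) \<Rightarrow> (nat \<Rightarrow> real) \<Rightarrow> bool" where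
  "sorted_ranking h pos a \<longleftrightarrow> inj pos \<and> range pos = {..<CARD('n)} \<and>
     (\<forall>i. a (pos i) = \<bar>h $ i\<bar>) \<and> antimono a \<and> (\<forall>p. p \<notin> range pos \<longrightarrow> a p = 0)"

lemma sorted_ranking_exists:
  fixes h :: "real ^ 'n"
  shows "\<exists>pos a. sorted_ranking h pos a"
proof -
  obtain xs0 :: "'n list" where xs0: "set xs0 = UNIV" "distinct xs0"
    using finite_distinct_list[of "UNIV :: 'n set"] by auto
  define xs where "xs = sort_key (\<lambda>i. - \<bar>h $ i\<bar>) xs0"
  have set_xs: "set xs = UNIV" and "distinct xs" using xs0 by (auto simp: xs_def)
  then have len: "length xs = CARD('n)" by (metis distinct_card)
  have sorted: "sorted (map (\<lambda>i. - \<bar>h $ i\<bar>) xs)" unfolding xs_def by simp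
  have bij: "bij_betw (nth xs) {..<CARD('n)} UNIV"
    using set_xs \<open>distinct xs\<close> len by (metis bij_betw_nth lessThan_atLeast0)
  define pos where "pos = inv_into {..<CARD('n)} (nth xs)"
  define a where "a p = (if p < CARD('n) then \<bar>h $ (xs ! p)\<bar> else 0)" for p
  have "bij_betw pos UNIV {..<CARD('n)}"
    unfolding pos_def using bij by (rule bij_betw_inv_into)
  then have "inj pos" "range pos = {..<CARD('n)}" by (auto simp: bij_betw_def)
  moreover have "a (pos i) = \<bar>h $ i\<bar>" for i
  proof -
    have "pos i < CARD('n)" using \<open>range pos = _\<close> by auto
    moreover have "xs ! pos i = i"
      unfolding pos_def using bij by (simp add: bij_betw_inv_into_right)
    ultimately show ?thesis by (simp add: a_def)
  qed
  moreover have "antimono a"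
  proof (rule antimonoI)
    fix p q :: nat
    assume "p \<le> q"
    show "a q \<le> a p"
    proof (cases "q < CARD('n)")
      case True
      then show ?thesis
        using sorted len \<open>p \<le> q\<close> by (auto simp: a_def sorted_iff_nth_mono)
    qed (simp add: a_def)
  qed
  moreover have "a p = 0" if "p \<notin> range pos" for p
    using that \<open>range pos = _\<close> by (simp add: a_def)
  ultimately show ?thesis unfolding sorted_ranking_def by blast
qed

lemma sorted_ranking_nonneg:
  fixes h :: "real ^ 'n"
  assumes "sorted_ranking h pos a"
  shows "0 \<le> a p"
proof (cases "p \<in> range pos")
  case True
  then obtain i where "p = pos i" by blast
  then show ?thesis using assms unfolding sorted_ranking_def by simp
qed (use assms in \<open>simp add: sorted_ranking_def\<close>)

lemma sum_vimage_inj: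
  fixes pos :: "'i \<Rightarrow> 'p" and f :: "'p \<Rightarrow> 'a :: comm_monoid_add"
  assumes "inj pos" "finite C" and outside: "\<And>p. p \<in> C \<Longrightarrow> p \<notin> range pos \<Longrightarrow> f p = 0"
  shows "(\<Sum>i\<in>pos -` C. f (pos i)) = sum f C"
proof -
  have "(\<Sum>i\<in>pos -` C. f (pos i)) = sum f (pos ` (pos -` C))"
    using sum.reindex[of pos "pos -` C" f] \<open>inj pos\<close> by (simp add: inj_on_def inj_def)
  also have "pos ` (pos -` C) = C \<inter> range pos" by blast
  also have "sum f (C \<inter> range pos) = sum f C"
    using \<open>finite C\<close> outside by (intro sum.mono_neutral_left) auto
  finally show ?thesis .
qed

definition restrict_vec :: "'n set \<Rightarrow> real ^ 'n \<Rightarrow> real ^ 'n" where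
  "restrict_vec T x = (\<chi> i. if i \<in> T then x $ i else 0)"

lemma norm_restrict_vec_sq: "(norm (restrict_vec T x))\<^sup>2 = (\<Sum>i\<in>T. (x $ i)\<^sup>2)"
proof -
  have "(norm (restrict_vec T x))\<^sup>2 = (\<Sum>i\<in>UNIV. if i \<in> T then (x $ i)\<^sup>2 else 0)"
    unfolding power2_norm_eq_inner inner_vec_def restrict_vec_def
    by (rule sum.cong) (auto simp: power2_eq_square)
  then show ?thesis by (simp add: sum.If_cases)
qed

lemma inner_restrict_vec_disjoint:
  "T \<inter> T' = {} \<Longrightarrow> inner (restrict_vec T x) (restrict_vec T' y) = 0"
  unfolding inner_vec_def restrict_vec_def by (rule sum.neutral) auto

lemma sparse_if_support_subset:
  fixes x :: "real ^ 'n"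
  assumes "{i. x $ i \<noteq> 0} \<subseteq> T" "card T \<le> s"
  shows "sparse s x"
  using card_mono[OF finite assms(1)] assms(2) unfolding sparse_def by simp

lemma sum_restrict_vec_partition:
  fixes x :: "real ^ 'n"
  assumes "finite J" and partition: "\<And>i. \<exists>!j. j \<in> J \<and> i \<in> T j"
  shows "(\<Sum>j\<in>J. restrict_vec (T j) x) = x"
proof -
  have "(\<Sum>j\<in>J. if i \<in> T j then x $ i else 0) = x $ i" for i
  proof -
    obtain j0 where j0: "j0 \<in> J" "i \<in> T j0" and unique: "\<And>j. j \<in> J \<Longrightarrow> i \<in> T j \<Longrightarrow> j = j0"
      using partition[of i] unfolding Ex1_def by auto
    have "(\<Sum>j\<in>J. if i \<in> T j then x $ i else 0) = (\<Sum>j\<in>J. if j = j0 then x $ i else 0)"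
      by (intro sum.cong refl) (metis j0(2) unique)
    also have "\<dots> = x $ i" using \<open>finite J\<close> j0 by simp
    finally show ?thesis .
  qed
  then show ?thesis by (simp add: vec_eq_iff sum_component restrict_vec_def)
qed

lemma l1norm_by_blocks:
  fixes h :: "real ^ 'n"
  assumes rank: "sorted_ranking h pos a" and "0 < k"
  shows "l1norm h = sum a (block k 0) + (\<Sum>j<CARD('n). sum a (block k (Suc j)))"
proof -
  have "inj pos" and range_pos: "range pos = {..<CARD('n)}" and a_pos: "\<And>i. a (pos i) = \<bar>h $ i\<bar>"
    and a_outside: "\<And>p. p \<notin> range pos \<Longrightarrow> a p = 0"
    using rank unfolding sorted_ranking_def by auto
  have "l1norm h = (\<Sum>i\<in>pos -` {..<CARD('n)}. a (pos i))"
    unfolding l1norm_def using range_pos by (auto simp: a_pos intro!: sum.cong)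
  also have "\<dots> = sum a {..<CARD('n)}"
    by (rule sum_vimage_inj[OF \<open>inj pos\<close>]) (simp_all add: a_outside)
  also have "\<dots> = sum a {..<Suc CARD('n) * k}"
  proof (rule sum.mono_neutral_left)
    have "CARD('n) \<le> Suc CARD('n) * k" using \<open>0 < k\<close> by (cases k) auto
    then show "{..<CARD('n)} \<subseteq> {..<Suc CARD('n) * k}" by auto
  qed (use range_pos a_outside in auto)
  also have "\<dots> = (\<Sum>j<Suc CARD('n). sum a (block k j))" by (rule sum_blocks[symmetric])
  finally show ?thesis by (simp only: sum.lessThan_Suc_shift)
qed

lemma sum_le_head_block:
  fixes h :: "real ^ 'n"
  assumes rank: "sorted_ranking h pos a" and "card S \<le> k"
  shows "(\<Sum>i\<in>S. \<bar>h $ i\<bar>) \<le> sum a (block k 0)"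
proof -
  have "inj pos" and "antimono a" and a_pos: "\<And>i. a (pos i) = \<bar>h $ i\<bar>"
    using rank unfolding sorted_ranking_def by auto
  have "(\<Sum>i\<in>S. \<bar>h $ i\<bar>) = sum a (pos ` S)"
    using sum.reindex[of pos S a] \<open>inj pos\<close> by (simp add: a_pos inj_on_def inj_def)
  also have "\<dots> \<le> sum a {..<k}"
    using card_image_le[of S pos] \<open>card S \<le> k\<close> sorted_ranking_nonneg[OF rank]
    by (intro sum_le_initial_segment \<open>antimono a\<close>) auto
  finally show ?thesis by (simp add: block_def lessThan_atLeast0)
qed

(* Splitting a kernel vector h into its restrictions to the rank blocks yields the head
   energy hypothesis of sorted_head_le_tail: pairs of blocks are 2k-sparse and the head
   block is orthogonal to the others. *)
lemma rip_sorted_head_energy: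
  fixes A :: "real ^ 'n ^ 'm" and h :: "real ^ 'n"
  assumes rip: "has_rip A (2 * k) \<delta>" and "0 \<le> \<delta>" and kernel: "A *v h = 0"
    and rank: "sorted_ranking h pos a" and "0 < k"
  shows "(1 - \<delta>) * (\<Sum>p\<in>block k 0. (a p)\<^sup>2)
           \<le> \<delta> * (\<Sum>j<CARD('n). sqrt (\<Sum>p\<in>block k (Suc j). (a p)\<^sup>2))\<^sup>2 / 2"
proof -
  have "inj pos" and range_pos: "range pos = {..<CARD('n)}" and a_pos: "\<And>i. a (pos i) = \<bar>h $ i\<bar>"
    and a_outside: "\<And>p. p \<notin> range pos \<Longrightarrow> a p = 0"
    using rank unfolding sorted_ranking_def by auto
  define T where "T j = pos -` block k j" for j
  define z where "z j = restrict_vec (T j) h" for j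
  have card_T: "card (T j) \<le> k" for j
    using card_vimage_inj_on_le[OF \<open>inj pos\<close>, of "block k j"] unfolding T_def by simp
  have norm_z: "(norm (z j))\<^sup>2 = (\<Sum>p\<in>block k j. (a p)\<^sup>2)" for j
    unfolding z_def norm_restrict_vec_sq T_def
    using sum_vimage_inj[OF \<open>inj pos\<close>, of "block k j" "\<lambda>p. (a p)\<^sup>2"]
    by (simp add: a_outside a_pos)
  have sparse_z: "sparse (2 * k) (z j)" for j
    using card_T[of j] by (intro sparse_if_support_subset[of _ "T j"]) (auto simp: z_def restrict_vec_def)
  have sparse_comb: "sparse (2 * k) (z 0 + l *\<^sub>R z (Suc j))" for j l
    using card_Un_le[of "T 0" "T (Suc j)"] card_T[of 0] card_T[of "Suc j"]
    by (intro sparse_if_support_subset[of _ "T 0 \<union> T (Suc j)"]) (auto simp: z_def restrict_vec_def)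
  have orth: "inner (z 0) (z (Suc j)) = 0" for j
    unfolding z_def T_def
    by (rule inner_restrict_vec_disjoint) (auto simp: mem_block_iff[OF \<open>0 < k\<close>])
  have decomposition: "z 0 + (\<Sum>j<CARD('n). z (Suc j)) = h"
  proof -
    have "\<exists>!j. j \<in> {..<Suc CARD('n)} \<and> i \<in> T j" for i
    proof -
      have "pos i < CARD('n)" using range_pos by blast
      then have "pos i div k < Suc CARD('n)" using div_le_dividend[of "pos i" k] by linarith
      then show ?thesis unfolding T_def by (auto simp: mem_block_iff[OF \<open>0 < k\<close>])
    qed
    then have "(\<Sum>j<Suc CARD('n). z j) = h" unfolding z_def by (intro sum_restrict_vec_partition) auto
    then show ?thesis by (simp only: sum.lessThan_Suc_shift)
  qed
  have "(1 - \<delta>) * (norm (z 0))\<^sup>2 \<le> \<delta> * (\<Sum>j<CARD('n). norm (z (Suc j)))\<^sup>2 / 2"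
    using decomposition kernel
    by (intro rip_head_energy[OF rip \<open>0 \<le> \<delta>\<close>]) (simp_all add: sparse_z sparse_comb orth)
  moreover have norm_z_sqrt: "norm (z j) = sqrt (\<Sum>p\<in>block k j. (a p)\<^sup>2)" for j
    unfolding norm_z[symmetric] by simp
  ultimately show ?thesis unfolding norm_z by (simp only: norm_z_sqrt)
qed

lemma rip_null_space_property:
  fixes A :: "real ^ 'n ^ 'm" and h :: "real ^ 'n" and S :: "'n set"
  assumes rip: "has_rip A (2 * k) \<delta>" and "0 \<le> \<delta>" "\<delta> \<le> 0.4404"
    and kernel: "A *v h = 0" and "card S \<le> k"
  shows "11 * (\<Sum>i\<in>S. \<bar>h $ i\<bar>) \<le> 10 * (l1norm h - (\<Sum>i\<in>S. \<bar>h $ i\<bar>))"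
proof (cases "k = 0")
  case True
  then have "S = {}" using \<open>card S \<le> k\<close> by (simp add: card_eq_0_iff)
  then show ?thesis by (simp add: l1norm_def sum_nonneg)
next
  case False
  then have "0 < k" by simp
  obtain pos a where rank: "sorted_ranking h pos a" using sorted_ranking_exists by blast
  then have "antimono a" unfolding sorted_ranking_def by blast
  have "11 * sum a (block k 0) \<le> 10 * (\<Sum>j<CARD('n). sum a (block k (Suc j)))"
    using rip_sorted_head_energy[OF rip \<open>0 \<le> \<delta>\<close> kernel rank \<open>0 < k\<close>]
    by (rule sorted_head_le_tail[OF \<open>antimono a\<close> sorted_ranking_nonneg[OF rank] \<open>0 < k\<close> assms(2,3)])
  moreover note l1norm_by_blocks[OF rank \<open>0 < k\<close>]
  moreover note sum_le_head_block[OF rank \<open>card S \<le> k\<close>]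
  ultimately show ?thesis by simp
qed

lemma abs_le_linfnorm: "\<bar>x $ i\<bar> \<le> linfnorm x"
  unfolding linfnorm_def by (rule Max_ge) auto

(* Off the support it is at least
   |d|; on the support the quadratic term contributes y0 d / alpha >= -|d|/10 since
   |y0| <= alpha/10, so it is at least -11/10 |d|. *)
lemma coordinate_increment:
  fixes y0 d \<alpha> :: real
  assumes "0 < \<alpha>" and small: "10 * \<bar>y0\<bar> \<le> \<alpha>"
  shows "(if y0 \<noteq> 0 then - (11/10) * \<bar>d\<bar> else \<bar>d\<bar>) + d\<^sup>2 / (2 * \<alpha>)
           \<le> (\<bar>y0 + d\<bar> + (y0 + d)\<^sup>2 / (2 * \<alpha>)) - (\<bar>y0\<bar> + y0\<^sup>2 / (2 * \<alpha>))"
proof -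
  have expand: "(\<bar>y0 + d\<bar> + (y0 + d)\<^sup>2 / (2 * \<alpha>)) - (\<bar>y0\<bar> + y0\<^sup>2 / (2 * \<alpha>))
      = \<bar>y0 + d\<bar> - \<bar>y0\<bar> + y0 * d / \<alpha> + d\<^sup>2 / (2 * \<alpha>)"
    using \<open>0 < \<alpha>\<close> by (simp add: field_simps power2_eq_square)
  have "\<bar>y0 * d / \<alpha>\<bar> \<le> \<bar>d\<bar> / 10"
  proof -
    have "\<bar>y0\<bar> * \<bar>d\<bar> \<le> (\<alpha> / 10) * \<bar>d\<bar>" using small by (intro mult_right_mono) auto
    then show ?thesis using \<open>0 < \<alpha>\<close> by (simp add: abs_mult field_simps)
  qed
  then have "- (\<bar>d\<bar> / 10) \<le> y0 * d / \<alpha>" by linarith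
  moreover have "- \<bar>d\<bar> \<le> \<bar>y0 + d\<bar> - \<bar>y0\<bar>" by simp
  ultimately have "(if y0 \<noteq> 0 then - (11/10) * \<bar>d\<bar> else \<bar>d\<bar>) \<le> \<bar>y0 + d\<bar> - \<bar>y0\<bar> + y0 * d / \<alpha>"
    by (cases "y0 = 0") auto
  then show ?thesis unfolding expand by simp
qed

lemma P2_obj_increment:
  fixes x0 h :: "real ^ 'n"
  assumes "0 < \<alpha>" and "10 * linfnorm x0 \<le> \<alpha>"
  shows "P2_obj \<alpha> x0 + (l1norm h - 21/10 * (\<Sum>i\<in>{i. x0 $ i \<noteq> 0}. \<bar>h $ i\<bar>))
           + (norm h)\<^sup>2 / (2 * \<alpha>) \<le> P2_obj \<alpha> (x0 + h)"
proof -
  let ?S = "{i. x0 $ i \<noteq> 0}"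
  have obj_sum: "P2_obj \<alpha> x = (\<Sum>i\<in>UNIV. \<bar>x $ i\<bar> + (x $ i)\<^sup>2 / (2 * \<alpha>))" for x :: "real ^ 'n"
    unfolding P2_obj_def l1norm_def power2_norm_eq_inner inner_vec_def
    by (simp add: sum.distrib sum_divide_distrib power2_eq_square)
  have "(\<Sum>i\<in>UNIV. (if i \<in> ?S then - (11/10) * \<bar>h $ i\<bar> else \<bar>h $ i\<bar>) + (h $ i)\<^sup>2 / (2 * \<alpha>))
      \<le> P2_obj \<alpha> (x0 + h) - P2_obj \<alpha> x0"
    unfolding obj_sum sum_subtractf[symmetric]
  proof (intro sum_mono)
    fix i
    have "10 * \<bar>x0 $ i\<bar> \<le> \<alpha>" using abs_le_linfnorm[of x0 i] assms(2) by simp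
    from coordinate_increment[OF \<open>0 < \<alpha>\<close> this, of "h $ i"]
    show "(if i \<in> ?S then - (11/10) * \<bar>h $ i\<bar> else \<bar>h $ i\<bar>) + (h $ i)\<^sup>2 / (2 * \<alpha>)
        \<le> \<bar>(x0 + h) $ i\<bar> + ((x0 + h) $ i)\<^sup>2 / (2 * \<alpha>) - (\<bar>x0 $ i\<bar> + (x0 $ i)\<^sup>2 / (2 * \<alpha>))"
      by simp
  qed
  moreover have "(\<Sum>i\<in>UNIV. (if i \<in> ?S then - (11/10) * \<bar>h $ i\<bar> else \<bar>h $ i\<bar>))
      = l1norm h - 21/10 * (\<Sum>i\<in>?S. \<bar>h $ i\<bar>)"
  proof -
    have "(\<Sum>i\<in>UNIV. (if i \<in> ?S then - (11/10) * \<bar>h $ i\<bar> else \<bar>h $ i\<bar>))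
        = (\<Sum>i\<in>UNIV. \<bar>h $ i\<bar> - (if i \<in> ?S then 21/10 * \<bar>h $ i\<bar> else 0))"
      by (rule sum.cong) auto
    also have "\<dots> = l1norm h - (\<Sum>i\<in>?S. 21/10 * \<bar>h $ i\<bar>)"
      unfolding l1norm_def sum_subtractf
      using sum.inter_restrict[of UNIV "\<lambda>i. 21/10 * \<bar>h $ i\<bar>" ?S] by simp
    finally show ?thesis by (simp add: sum_distrib_left)
  qed
  moreover have "(\<Sum>i\<in>UNIV. (h $ i)\<^sup>2) = (norm h)\<^sup>2"
    unfolding power2_norm_eq_inner inner_vec_def by (simp add: power2_eq_square)
  ultimately show ?thesis by (simp add: sum.distrib sum_divide_distrib[symmetric])
qed

theorem mainTheorem2:
  fixes A :: "real ^ 'n ^ 'm" and x0 :: "real ^ 'n" and k :: nat and \<alpha> :: real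
  assumes "sparse k x0"
    and "rip_const A (2 * k) \<le> 0.4404"
    and "\<alpha> > 0"
    and "\<alpha> \<ge> 10 * linfnorm x0"
  shows "P2_unique_minimizer A (A *v x0) \<alpha> x0"
  unfolding P2_unique_minimizer_def
proof (intro conjI refl allI impI, elim conjE)
  fix x assume same_data: "A *v x = A *v x0" and "x \<noteq> x0"
  define h where "h = x - x0"
  define S where "S = {i. x0 $ i \<noteq> 0}"
  have "A *v h = 0" unfolding h_def using same_data by (simp add: matrix_vector_mult_diff_distrib)
  moreover have "card S \<le> k" using \<open>sparse k x0\<close> unfolding sparse_def S_def .
  ultimately have "11 * (\<Sum>i\<in>S. \<bar>h $ i\<bar>) \<le> 10 * (l1norm h - (\<Sum>i\<in>S. \<bar>h $ i\<bar>))"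
    using rip_const_has_rip[of A "2 * k"] assms(2) by (intro rip_null_space_property) auto
  then have "0 \<le> l1norm h - 21/10 * (\<Sum>i\<in>S. \<bar>h $ i\<bar>)" by simp
  moreover have "0 < (norm h)\<^sup>2 / (2 * \<alpha>)" using \<open>x \<noteq> x0\<close> \<open>\<alpha> > 0\<close> by (simp add: h_def)
  moreover have "P2_obj \<alpha> x0 + (l1norm h - 21/10 * (\<Sum>i\<in>S. \<bar>h $ i\<bar>)) + (norm h)\<^sup>2 / (2 * \<alpha>)
      \<le> P2_obj \<alpha> x"
    using P2_obj_increment[OF \<open>\<alpha> > 0\<close> assms(4), of h] unfolding S_def h_def by simp
  ultimately show "P2_obj \<alpha> x0 < P2_obj \<alpha> x" by linarith
qed

end
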